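(* Let $i,j\ge 1$ be integers with $i+j\ge 16$, and let $m=i+j+2(i+j)^{3/4}$. Let $S'$ be a set of $m$ distinct elements of a totally ordered universe, where the rank of an element of $S'$ is its position in increasing order ($1$ for the smallest, $m$ for the largest). Let $R$ be a multiset of $m^{3/4}$ elements of $S'$ drawn uniformly and independently at random with replacement, and let $k=j\,m^{-1/4}+m^{1/2}/2$. Let $E_1$ be the event that at least $k$ of the samples in $R$ (counted with multiplicity) have rank at most $j$ in $S'$, and let $E_2$ be the event that at least $m^{3/4}-k$ of the samples in $R$ (counted with multiplicity) have rank at least $m-i+1$ in $S'$. Then ${\rm Prob}(E_1)\le m^{-1/4}$ and ${\rm Prob}(E_2)\le m^{-1/4}$.
   Context: Quantities such as $m^{3/4}$, $m^{1/2}/2$ and $j\,m^{-1/4}$ are treated as integers (floors/ceilings omitted). *)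

theory Defs
  imports "HOL-Probability.Probability"
begin

definition rank :: "'a::linorder set \<Rightarrow> 'a \<Rightarrow> nat" where
  "rank S x = card {y \<in> S. y \<le> x}"

text \<open>A sequence of s independent uniform draws from S (with replacement) is a
  uniformly random element of the function space PiE {..<s} (\<lambda>_. S).\<close>
definition samples :: "nat \<Rightarrow> (nat \<Rightarrow> 'a) \<Rightarrow> 'a multiset" where
  "samples s f = image_mset f (mset_set {..<s})"

definition sample_pmf :: "'a set \<Rightarrow> nat \<Rightarrow> (nat \<Rightarrow> 'a) pmf" where
  "sample_pmf S s = pmf_of_set (PiE {..<s} (\<lambda>_. S))"

end

theory Submission
  imports Defs
begin

text \<open>Write u = m^(1/4), so that s = \<lfloor>u^3\<rfloor> and k = j/u + u^2/2. The number of samples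
  whose rank lies in a fixed set of c ranks is binomially distributed with parameters s and
  c/m, so Hoeffding's inequality bounds both probabilities by exp(-2\<epsilon>^2/s), where \<epsilon> is the
  gap between the threshold and the mean. For E1 the mean is at most s j/m \<le> j/u, so
  \<epsilon> \<ge> u^2/2. For E2 the padding m - (i + j) \<approx> 2(i + j)^(3/4) is at least u^3 + 3u/4,
  which leaves \<epsilon> \<ge> u^2/2 - 1/4. In both cases 2\<epsilon>^2/s \<ge> (u - 1/u)/2, and
  ln u \<le> (u - 1/u)/2 turns exp(-2\<epsilon>^2/s) into the bound 1/u = m^(-1/4).\<close>

lemma size_filter_samples:
  "size (filter_mset P (samples s f)) = card {l \<in> {..<s}. P (f l)}"
  unfolding samples_def by (simp add: filter_mset_image_mset)

lemma sample_pmf_eq_Pi_pmf: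
  assumes "finite S" "S \<noteq> {}"
  shows "sample_pmf S s = Pi_pmf {..<s} undefined (\<lambda>_. pmf_of_set S)"
proof -
  have "PiE {..<s} (\<lambda>_. S) = PiE_dflt {..<s} undefined (\<lambda>_. S)"
    by (auto simp: PiE_def PiE_dflt_def extensional_def)
  then show ?thesis
    unfolding sample_pmf_def using assms by (simp add: Pi_pmf_of_set)
qed

lemma map_pmf_of_set_eq_bernoulli_pmf:
  assumes "finite S" "S \<noteq> {}"
  shows "map_pmf P (pmf_of_set S) = bernoulli_pmf (card {x \<in> S. P x} / card S)"
proof (rule pmf_eqI)
  fix b :: bool
  have card_le: "card {x \<in> S. P x} \<le> card S"
    using assms by (intro card_mono) auto
  have "pmf (map_pmf P (pmf_of_set S)) b = card {x \<in> S. P x = b} / card S"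
    using assms by (simp add: pmf_map measure_pmf_of_set vimage_def Int_def conj_commute)
  moreover have "card {x \<in> S. \<not> P x} = card S - card {x \<in> S. P x}"
    using assms by (subst card_Diff_subset[symmetric]) (auto intro: arg_cong[of _ _ card])
  ultimately show "pmf (map_pmf P (pmf_of_set S)) b = pmf (bernoulli_pmf (card {x \<in> S. P x} / card S)) b"
    using assms card_le by (cases b) (auto simp: divide_le_eq_1 card_gt_0_iff diff_divide_distrib)
qed

lemma count_samples_binomial_pmf:
  assumes "finite S" "S \<noteq> {}"
  shows "map_pmf (\<lambda>f. size (filter_mset P (samples s f))) (sample_pmf S s)
         = binomial_pmf s (card {x \<in> S. P x} / card S)"
proof -
  define p where "p = card {x \<in> S. P x} / card S"
  have "p \<in> {0..1}"
    unfolding p_def using assms by (auto simp: divide_le_eq_1 card_gt_0_iff intro: card_mono)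
  then have "binomial_pmf s p
      = map_pmf (\<lambda>f. card {l \<in> {..<s}. f l}) (Pi_pmf {..<s} (P undefined) (\<lambda>_. bernoulli_pmf p))"
    by (intro binomial_pmf_altdef') auto
  also have "Pi_pmf {..<s} (P undefined) (\<lambda>_. bernoulli_pmf p)
      = map_pmf (\<lambda>f. P \<circ> f) (sample_pmf S s)"
    unfolding p_def map_pmf_of_set_eq_bernoulli_pmf[OF assms, symmetric]
      sample_pmf_eq_Pi_pmf[OF assms] by (rule Pi_pmf_map) auto
  finally show ?thesis
    unfolding p_def map_pmf_comp size_filter_samples by (simp add: o_def)
qed

lemma prob_count_samples_ge:
  assumes "finite S" "S \<noteq> {}" "0 < s" "0 \<le> \<epsilon>"
    and "real s * (card {x \<in> S. P x} / card S) + \<epsilon> \<le> K"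
  shows "measure_pmf.prob (sample_pmf S s) {f. K \<le> real (size (filter_mset P (samples s f)))}
         \<le> exp (-2 * \<epsilon>\<^sup>2 / s)"
proof -
  define p where "p = card {x \<in> S. P x} / card S"
  have "p \<in> {0..1}"
    unfolding p_def using assms by (auto simp: divide_le_eq_1 card_gt_0_iff intro: card_mono)
  then interpret binomial_distribution s p by unfold_locales
  have "measure_pmf.prob (sample_pmf S s) {f. K \<le> real (size (filter_mset P (samples s f)))}
      = measure_pmf.prob (binomial_pmf s p) {c. K \<le> real c}"
    by (simp flip: count_samples_binomial_pmf[OF assms(1,2)] add: p_def)
  also have "\<dots> \<le> measure_pmf.prob (binomial_pmf s p) {c. s * p + \<epsilon> \<le> real c}"
    using assms(5) unfolding p_def[symmetric] by (intro measure_pmf.finite_measure_mono) auto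
  also have "\<dots> \<le> exp (-2 * \<epsilon>\<^sup>2 / s)"
    by (rule prob_ge) (use assms in auto)
  finally show ?thesis .
qed

lemma rank_less_rank:
  fixes S :: "'a::linorder set"
  assumes "finite S" "y \<in> S" "x < y"
  shows "rank S x < rank S y"
proof -
  have "{z \<in> S. z \<le> x} \<subseteq> {z \<in> S. z \<le> y}" "y \<notin> {z \<in> S. z \<le> x}"
    using assms by auto
  moreover have "y \<in> {z \<in> S. z \<le> y}" using assms by simp
  ultimately have "{z \<in> S. z \<le> x} \<subset> {z \<in> S. z \<le> y}" by blast
  then show ?thesis unfolding rank_def using assms(1) by (intro psubset_card_mono) auto
qed

lemma bij_betw_rank:
  fixes S :: "'a::linorder set"
  assumes "finite S"
  shows "bij_betw (rank S) S {1..card S}"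
proof -
  have inj: "inj_on (rank S) S"
    using rank_less_rank[OF assms] by (intro strict_mono_on_imp_inj_on) (auto intro: strict_mono_onI)
  have "rank S ` S \<subseteq> {1..card S}"
    unfolding rank_def using assms by (auto simp: Suc_le_eq card_gt_0_iff intro: card_mono)
  moreover have "card (rank S ` S) = card {1..card S}"
    using card_image[OF inj] by simp
  ultimately have "rank S ` S = {1..card S}"
    by (intro card_subset_eq) auto
  with inj show ?thesis unfolding bij_betw_def by simp
qed

lemma card_rank_in:
  fixes S :: "'a::linorder set"
  assumes "finite S" "A \<subseteq> {1..card S}"
  shows "card {x \<in> S. rank S x \<in> A} = card A"
proof -
  have "bij_betw (rank S) {x \<in> S. rank S x \<in> A} A"
    using bij_betw_rank[OF assms(1)] assms(2)
    by (auto simp: bij_betw_def inj_on_def image_iff)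
  then show ?thesis by (rule bij_betw_same_card)
qed

lemma card_rank_le:
  fixes S :: "'a::linorder set"
  assumes "finite S" "j \<le> card S"
  shows "card {x \<in> S. rank S x \<le> j} = j"
proof -
  have "{x \<in> S. rank S x \<le> j} = {x \<in> S. rank S x \<in> {1..j}}"
    using bij_betw_rank[OF assms(1)] by (force simp: bij_betw_def)
  then show ?thesis using card_rank_in[OF assms(1), of "{1..j}"] assms by simp
qed

lemma card_rank_ge:
  fixes S :: "'a::linorder set"
  assumes "finite S" "i \<le> card S"
  shows "card {x \<in> S. card S - i + 1 \<le> rank S x} = i"
proof -
  have "{x \<in> S. card S - i + 1 \<le> rank S x} = {x \<in> S. rank S x \<in> {card S - i + 1..card S}}"
    using bij_betw_rank[OF assms(1)] by (force simp: bij_betw_def)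
  then show ?thesis using card_rank_in[OF assms(1), of "{card S - i + 1..card S}"] assms by simp
qed

lemma le_exp_half_diff_inverse:
  fixes x :: real
  assumes "1 \<le> x"
  shows "x \<le> exp ((x - 1/x) / 2)"
proof -
  let ?f = "\<lambda>y::real. (y - 1/y) / 2 - ln y"
  have "?f 1 \<le> ?f x"
  proof (rule DERIV_nonneg_imp_increasing_open[OF assms])
    fix y :: real assume "1 < y" "y < x"
    then have "DERIV ?f y :> (1 - 1/y)^2 / 2"
      by (auto intro!: derivative_eq_intros simp: field_simps power2_eq_square)
    then show "\<exists>d. DERIV ?f y :> d \<and> 0 \<le> d" by auto
  next
    show "continuous_on {1..x} ?f"
      by (intro continuous_intros) auto
  qed
  then have "ln x \<le> (x - 1/x) / 2" by simp
  then show ?thesis using assms by (metis exp_le_cancel_iff exp_ln_iff less_le_trans zero_less_one)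
qed

lemma exp_neg_le_inverse:
  fixes x y :: real
  assumes "1 \<le> x" "(x - 1/x) / 2 \<le> y"
  shows "exp (- y) \<le> 1 / x"
proof -
  have "x \<le> exp y"
    using le_exp_half_diff_inverse[OF assms(1)] assms(2) by (meson exp_le_cancel_iff order_trans)
  then show ?thesis using assms(1) by (simp add: exp_minus field_simps)
qed

lemma pow4_le_sixteen_cube:
  fixes u :: real
  assumes "19/8 \<le> u"
  shows "(u^3 + 3/4*u + 1)^4 \<le> 16 * (u^4 - u^3 - 3/4*u)^3"
proof -
  have "(19/8)^2 \<le> u^2" using assms by (intro power_mono) auto
  then have u3: "361/64 * u \<le> u^3"
    using mult_right_mono[of "(19/8)^2" "u^2" u] assms by (simp add: power2_eq_square power3_eq_cube)
  have u4: "19/8 * u^3 \<le> u^4"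
    using mult_right_mono[OF assms, of "u^3"] assms by (simp add: power3_eq_cube power4_eq_xxxx)
  have "(u^3 + 3/4*u + 1)^4 \<le> (121/100 * u^3)^4"
  proof (rule power_mono)
    show "u^3 + 3/4*u + 1 \<le> 121/100 * u^3" using u3 assms by linarith
  qed (use assms in auto)
  also have "\<dots> = (121/100)^4 * u^12"
    by (simp only: power_mult_distrib power_mult[symmetric]) simp
  also have "\<dots> \<le> 16 * (13/25)^3 * u^12"
    by (intro mult_right_mono) (simp_all add: power_divide)
  also have "\<dots> = 16 * (13/25 * u^4)^3"
    by (simp only: power_mult_distrib power_mult[symmetric]) simp
  also have "\<dots> \<le> 16 * (u^4 - u^3 - 3/4*u)^3"
    using u3 u4 assms by (intro mult_left_mono power_mono) auto
  finally show ?thesis .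
qed

lemma cube_le_of_fourth_power_eq:
  fixes n t u :: real
  assumes "0 \<le> t" "19/8 \<le> u" "u^4 = n + t" "16 * n^3 < (t + 1)^4"
  shows "u^3 + 3/4 * u \<le> t"
proof (rule ccontr)
  assume "\<not> ?thesis"
  then have t_less: "t < u^3 + 3/4 * u" by simp
  have "(u^3 + 3/4*u + 1)^4 \<le> 16 * (u^4 - u^3 - 3/4*u)^3"
    using pow4_le_sixteen_cube[OF assms(2)] .
  also have "\<dots> \<le> 16 * n^3"
    using t_less assms(3) by (simp add: power_mono_odd)
  also have "\<dots> < (t + 1)^4" by (fact assms(4))
  also have "\<dots> < (u^3 + 3/4*u + 1)^4"
    using t_less assms(1) by (intro power_strict_mono) auto
  finally have "(u^3 + 3/4*u + 1)^4 < (u^3 + 3/4*u + 1)^4" .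
  then show False by simp
qed

lemma powr_quarter_powers:
  fixes x :: real
  assumes "0 < x"
  shows "(x powr (1/4))^4 = x" "x powr (3/4) = (x powr (1/4))^3"
    "x powr (-1/4) = 1 / x powr (1/4)" "sqrt x = (x powr (1/4))^2"
  using assms by (simp_all add: powr_power powr_minus_divide flip: powr_half_sqrt)

lemma padded_size_bounds:
  assumes "16 \<le> n" "m = n + nat \<lfloor>2 * real n powr (3/4)\<rfloor>"
  shows "32 \<le> m" "real n + real m powr (3/4) + 3/4 * real m powr (1/4) \<le> real m"
proof -
  define t where "t = nat \<lfloor>2 * real n powr (3/4)\<rfloor>"
  have "(16::real) powr (3/4) \<le> real n powr (3/4)"
    using assms(1) by (intro powr_mono2) auto
  moreover have "(16::real) powr (3/4) = 8"
    by simp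
  ultimately have "16 \<le> t" unfolding t_def by linarith
  then show m32: "32 \<le> m" using assms unfolding t_def by linarith
  define u where "u = real m powr (1/4)"
  have m_eq: "real m = real n + real t"
    using assms(2) unfolding t_def by simp
  have u4: "u^4 = real n + real t"
    unfolding u_def m_eq[symmetric] using m32 by (simp add: powr_quarter_powers)
  have "(19/8)^4 \<le> u^4"
    using m32 u4 m_eq by (simp add: power_divide)
  then have "19/8 \<le> u"
    by (subst (asm) power_mono_iff) (auto simp: u_def)
  moreover have "16 * real n^3 < (real t + 1)^4"
  proof -
    have "2 * real n powr (3/4) < real t + 1"
      unfolding t_def by linarith
    then have "(2 * real n powr (3/4))^4 < (real t + 1)^4"
      by (intro power_strict_mono) auto
    moreover have "(real n powr (3/4))^4 = real n^3"
      using assms(1) by (simp add: powr_power)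
    ultimately show ?thesis by (simp add: power_mult_distrib)
  qed
  ultimately have "u^3 + 3/4 * u \<le> real t"
    using u4 by (intro cube_le_of_fourth_power_eq[of _ _ "real n"]) auto
  then show "real n + real m powr (3/4) + 3/4 * real m powr (1/4) \<le> real m"
    using m32 m_eq by (simp add: u_def powr_quarter_powers)
qed

lemma sample_size_bounds:
  fixes u :: real
  assumes "1 \<le> u" "s = nat \<lfloor>u^3\<rfloor>"
  shows "0 < s" "real s \<le> u^3" "u^3 - 1 < real s"
proof -
  have "1 \<le> u^3" using assms(1) by simp
  then show "0 < s" "real s \<le> u^3" "u^3 - 1 < real s"
    using assms(2) by linarith+
qed

lemma prob_count_low_ranks_ge:
  fixes S :: "'a::linorder set" and u :: real
  assumes "finite S" "real (card S) = u^4" "1 \<le> u" "s = nat \<lfloor>u^3\<rfloor>" "j \<le> card S"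
  shows "measure_pmf.prob (sample_pmf S s)
           {f. real j / u + u^2 / 2 \<le> real (size (filter_mset (\<lambda>x. rank S x \<le> j) (samples s f)))}
         \<le> 1 / u"
proof -
  note s = sample_size_bounds[OF assms(3,4)]
  have "S \<noteq> {}" using assms(2,3) by auto
  have "real s * (real j / real (card S)) \<le> u^3 * (real j / u^4)"
    using s unfolding assms(2) by (intro mult_right_mono) auto
  also have "\<dots> = real j / u"
    using assms(3) by (simp add: power_def field_simps)
  finally have mean: "real s * (card {x \<in> S. rank S x \<le> j} / card S) + u^2 / 2 \<le> real j / u + u^2 / 2"
    using card_rank_le[OF assms(1,5)] by simp
  have "measure_pmf.prob (sample_pmf S s)
           {f. real j / u + u^2 / 2 \<le> real (size (filter_mset (\<lambda>x. rank S x \<le> j) (samples s f)))}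
        \<le> exp (- (2 * (u^2 / 2)^2 / s))"
    using prob_count_samples_ge[OF assms(1) \<open>S \<noteq> {}\<close> s(1) _ mean] by simp
  also have "\<dots> \<le> 1 / u"
  proof (rule exp_neg_le_inverse[OF assms(3)])
    have "(u - 1/u) / 2 \<le> u^4 / (2 * u^3)"
      using assms(3) by (simp add: field_simps power_def)
    also have "\<dots> \<le> 2 * (u^2 / 2)^2 / s"
      using s assms(3) by (simp add: field_simps power_def)
    finally show "(u - 1/u) / 2 \<le> 2 * (u^2 / 2)^2 / s" .
  qed
  finally show ?thesis .
qed

lemma prob_count_high_ranks_ge:
  fixes S :: "'a::linorder set" and u :: real
  assumes "finite S" "real (card S) = u^4" "1 \<le> u" "s = nat \<lfloor>u^3\<rfloor>"
    and "real i + real j + u^3 + 3/4 * u \<le> real (card S)"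
  shows "measure_pmf.prob (sample_pmf S s)
           {f. real s - (real j / u + u^2 / 2)
               \<le> real (size (filter_mset (\<lambda>x. card S - i + 1 \<le> rank S x) (samples s f)))}
         \<le> 1 / u"
proof -
  note s = sample_size_bounds[OF assms(3,4)]
  have "S \<noteq> {}" using assms(2,3) by auto
  have "0 < u^3" using assms(3) by simp
  then have "real i \<le> real (card S)" using assms(3,5) by linarith
  then have "i \<le> card S" by simp
  define \<epsilon> where "\<epsilon> = real s * (1 - real i / card S) - (real j / u + u^2 / 2)"
  have mean: "real s * (card {x \<in> S. card S - i + 1 \<le> rank S x} / card S) + \<epsilon>
      \<le> real s - (real j / u + u^2 / 2)"
    unfolding card_rank_ge[OF assms(1) \<open>i \<le> card S\<close>] \<epsilon>_def by (simp add: algebra_simps)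
  have "(real (card S) - i) / u - (real (card S) - i) / u^4 = (u^3 - 1) * (real (card S) - i) / u^4"
    using assms(3) by (simp add: field_simps power_def)
  also have "\<dots> \<le> real s * (real (card S) - i) / u^4"
    using s \<open>i \<le> card S\<close> by (intro divide_right_mono mult_right_mono) auto
  also have "\<dots> = real s * (1 - real i / card S)"
    unfolding assms(2)[symmetric] using assms(2,3) by (simp add: field_simps)
  finally have "(real (card S) - i) / u - (real (card S) - i) / u^4 \<le> real s * (1 - real i / card S)" .
  moreover have "(real (card S) - i) / u^4 \<le> 1"
    unfolding assms(2)[symmetric] by (cases "card S = 0") (auto simp: divide_le_eq_1)
  moreover have "(real j + u^3 + 3/4 * u) / u \<le> (real (card S) - i) / u"
    using assms(3,5) by (intro divide_right_mono) auto
  moreover have "(real j + u^3 + 3/4 * u) / u = real j / u + u^2 + 3/4"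
    using assms(3) by (simp add: field_simps power_def)
  ultimately have eps: "u^2 / 2 - 1/4 \<le> \<epsilon>"
    unfolding \<epsilon>_def by linarith
  have "1 \<le> u^2" using assms(3) by simp
  then have "0 \<le> \<epsilon>" using eps by linarith
  have "measure_pmf.prob (sample_pmf S s)
           {f. real s - (real j / u + u^2 / 2)
               \<le> real (size (filter_mset (\<lambda>x. card S - i + 1 \<le> rank S x) (samples s f)))}
        \<le> exp (- (2 * \<epsilon>^2 / s))"
    using prob_count_samples_ge[OF assms(1) \<open>S \<noteq> {}\<close> s(1) \<open>0 \<le> \<epsilon>\<close> mean] by simp
  also have "\<dots> \<le> 1 / u"
  proof (rule exp_neg_le_inverse[OF assms(3)])
    have "u^4 / 4 - u^2 / 4 \<le> (u^2 / 2 - 1/4)^2"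
      by (simp add: field_simps eval_nat_numeral)
    also have "\<dots> \<le> \<epsilon>^2"
      using eps \<open>1 \<le> u^2\<close> by (intro power_mono) auto
    finally have eps2: "u^4 / 4 - u^2 / 4 \<le> \<epsilon>^2" .
    have "(u - 1/u) / 2 = 2 * (u^4 / 4 - u^2 / 4) / u^3"
      using assms(3) by (simp add: field_simps eval_nat_numeral)
    also have "\<dots> \<le> 2 * \<epsilon>^2 / u^3"
      using eps2 assms(3) by (intro divide_right_mono) auto
    also have "\<dots> \<le> 2 * \<epsilon>^2 / s"
      using s assms(3) by (intro divide_left_mono) auto
    finally show "(u - 1/u) / 2 \<le> 2 * \<epsilon>^2 / s" .
  qed
  finally show ?thesis .
qed

theorem lemma1:
  fixes i j m s :: nat and k :: real and S :: "'a::linorder set"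
  assumes "i \<ge> 1" and "j \<ge> 1" and "i + j \<ge> 16"
    and "m = i + j + nat \<lfloor>2 * real (i + j) powr (3/4)\<rfloor>"
    and "finite S" and "card S = m"
    and "s = nat \<lfloor>real m powr (3/4)\<rfloor>"
    and "k = real j * real m powr (-1/4) + sqrt (real m) / 2"
  shows "measure_pmf.prob (sample_pmf S s)
           {f. real (size (filter_mset (\<lambda>x. rank S x \<le> j) (samples s f))) \<ge> k}
         \<le> real m powr (-1/4) \<and>
         measure_pmf.prob (sample_pmf S s)
           {f. real (size (filter_mset (\<lambda>x. rank S x \<ge> m - i + 1) (samples s f))) \<ge> real s - k}
         \<le> real m powr (-1/4)"
proof -
  define u where "u = real m powr (1/4)"
  have m: "32 \<le> m" "real (i + j) + real m powr (3/4) + 3/4 * real m powr (1/4) \<le> real m"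
    using padded_size_bounds[OF assms(3,4)] by auto
  note powers = powr_quarter_powers[of "real m", folded u_def]
  have "1 \<le> u"
    using m(1) unfolding u_def by (intro ge_one_powr_ge_zero) auto
  have card: "real (card S) = u^4" and s: "s = nat \<lfloor>u^3\<rfloor>" and k: "k = real j / u + u^2 / 2"
    using m(1) powers assms(6-8) by simp_all
  have "real i + real j + u^3 + 3/4 * u \<le> real (card S)"
    using m powers assms(6) by (simp add: u_def)
  moreover have "j \<le> card S"
    using assms(4,6) by simp
  ultimately show ?thesis
    using prob_count_low_ranks_ge[OF assms(5) card \<open>1 \<le> u\<close> s]
      prob_count_high_ranks_ge[OF assms(5) card \<open>1 \<le> u\<close> s]
    using m(1) powers(3) unfolding k assms(6) by simp
qed

end
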